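(* Let $\rho^{AB}=\frac14\big(\mathbb{I}\otimes\mathbb{I}+\vec x\cdot\vec\sigma\otimes\mathbb{I}+\mathbb{I}\otimes\vec y\cdot\vec\sigma+\sum_{i=1}^3 t_i\,\sigma_i\otimes\sigma_i\big)$ be a two-qubit density matrix, where $\vec x,\vec y\in\mathbb{R}^3$ and $T=\mathrm{diag}\{t_1,t_2,t_3\}$. Let $\mathcal R=\mathrm{span}\{T^t\vec x,\vec y\}\subseteq\mathbb{R}^3$, let $\mathcal R^\perp$ be its orthogonal complement, let $x=|\vec x|$, and let $$t_0^2=\max_{\hat e_0\in\mathcal R^\perp,\ |\hat e_0|=1}\hat e_0^{\,t}T^tT\hat e_0.$$ Then $$\min_{\{\Pi_k^B\}}S(\rho^A|\{\Pi_k^B\})\le h_2\!\left(\frac{1+\sqrt{x^2+t_0^2}}{2}\right),$$ where the minimum is over all von Neumann (projective) measurements $\{\Pi_k^B\}$ on qubit $B$. Consequently $$C(\rho^{AB})\ge S(\rho^A)-h_2\!\left(\frac{1+\sqrt{x^2+t_0^2}}{2}\right),\qquad Q(\rho^{AB})\le S(\rho^B)-S(\rho^{AB})+h_2\!\left(\frac{1+\sqrt{x^2+t_0^2}}{2}\right).$$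
   Context: $\sigma_i$ are the Pauli matrices, $\vec a\cdot\vec\sigma=\sum_i a_i\sigma_i$; $\rho^A,\rho^B$ are the reduced states and $S(\rho)=-\mathrm{Tr}(\rho\log_2\rho)$. A von Neumann measurement on $B$ is $\Pi_k^B=\frac12(\mathbb{I}\pm\hat n\cdot\vec\sigma)$ ($k=0,1$) for a unit vector $\hat n$; $p_k=\mathrm{Tr}[(\mathbb{I}\otimes\Pi_k^B)\rho^{AB}(\mathbb{I}\otimes\Pi_k^B)]$, $\rho^A_k=\mathrm{Tr}_B[(\mathbb{I}\otimes\Pi_k^B)\rho^{AB}(\mathbb{I}\otimes\Pi_k^B)]/p_k$, and $S(\rho^A|\{\Pi_k^B\})=\sum_kp_kS(\rho^A_k)$. The classical correlation is $C(\rho^{AB})=\sup_{\{\Pi_k^B\}}\{S(\rho^A)-S(\rho^A|\{\Pi_k^B\})\}$ (supremum over von Neumann measurements on $B$), the mutual information is $I(\rho^{AB})=S(\rho^A)+S(\rho^B)-S(\rho^{AB})$, and the quantum discord is $Q(\rho^{AB})=I(\rho^{AB})-C(\rho^{AB})$. $h_2(x)=-x\log_2x-(1-x)\log_2(1-x)$. *)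

theory Defs
  imports "Jordan_Normal_Form.Char_Poly" "HOL-Computational_Algebra.Polynomial"
begin

(* 3-vectors of reals are represented as functions nat => real; only the
   components 1,2,3 are meaningful. *)

definition norm3 :: "(nat \<Rightarrow> real) \<Rightarrow> real" where
  "norm3 a = sqrt (\<Sum>i\<in>{1..3}. (a i)^2)"

definition dot3 :: "(nat \<Rightarrow> real) \<Rightarrow> (nat \<Rightarrow> real) \<Rightarrow> real" where
  "dot3 a b = (\<Sum>i\<in>{1..3}. a i * b i)"

definition unit3 :: "(nat \<Rightarrow> real) set" where
  "unit3 = {n. (\<Sum>i\<in>{1..3}. (n i)^2) = 1}"

definition pauli :: "nat \<Rightarrow> complex mat" where
  "pauli i = (if i = 1 then mat_of_rows_list 2 [[0, 1], [1, 0]]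
              else if i = 2 then mat_of_rows_list 2 [[0, -\<i>], [\<i>, 0]]
              else mat_of_rows_list 2 [[1, 0], [0, -1]])"

definition dot_sigma :: "(nat \<Rightarrow> real) \<Rightarrow> complex mat" where
  "dot_sigma a = complex_of_real (a 1) \<cdot>\<^sub>m pauli 1 + complex_of_real (a 2) \<cdot>\<^sub>m pauli 2
                 + complex_of_real (a 3) \<cdot>\<^sub>m pauli 3"

definition kron :: "complex mat \<Rightarrow> complex mat \<Rightarrow> complex mat" where
  "kron A B = mat (dim_row A * dim_row B) (dim_col A * dim_col B)
     (\<lambda>(i, j). A $$ (i div dim_row B, j div dim_col B) * B $$ (i mod dim_row B, j mod dim_col B))"

definition I2 :: "complex mat" where "I2 = one_mat 2"

definition rho_AB :: "(nat \<Rightarrow> real) \<Rightarrow> (nat \<Rightarrow> real) \<Rightarrow> (nat \<Rightarrow> real) \<Rightarrow> complex mat" where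
  "rho_AB x y t = (1/4 :: complex) \<cdot>\<^sub>m
     (kron I2 I2 + kron (dot_sigma x) I2 + kron I2 (dot_sigma y)
      + complex_of_real (t 1) \<cdot>\<^sub>m kron (pauli 1) (pauli 1)
      + complex_of_real (t 2) \<cdot>\<^sub>m kron (pauli 2) (pauli 2)
      + complex_of_real (t 3) \<cdot>\<^sub>m kron (pauli 3) (pauli 3))"

definition psd :: "complex mat \<Rightarrow> bool" where
  "psd A \<longleftrightarrow> (\<forall>v :: nat \<Rightarrow> complex.
      0 \<le> Re (\<Sum>i<dim_row A. \<Sum>j<dim_col A. cnj (v i) * A $$ (i, j) * v j))"

definition ptrace_B :: "complex mat \<Rightarrow> complex mat" where
  "ptrace_B M = mat 2 2 (\<lambda>(i, j). M $$ (2*i, 2*j) + M $$ (2*i+1, 2*j+1))"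

definition ptrace_A :: "complex mat \<Rightarrow> complex mat" where
  "ptrace_A M = mat 2 2 (\<lambda>(k, l). M $$ (k, l) + M $$ (2+k, 2+l))"

(* von Neumann entropy S(rho) = - Tr(rho log2 rho), computed from the eigenvalues
   (roots of the characteristic polynomial, with multiplicity), 0 log 0 = 0 *)
definition eta :: "real \<Rightarrow> real" where
  "eta p = (if p \<le> 0 then 0 else p * log 2 p)"

definition vN_entropy :: "complex mat \<Rightarrow> real" where
  "vN_entropy \<rho> = - (\<Sum>l\<in>#proots (char_poly \<rho>). eta (Re l))"

definition h2 :: "real \<Rightarrow> real" where
  "h2 p = - p * log 2 p - (1 - p) * log 2 (1 - p)"

definition proj_B :: "(nat \<Rightarrow> real) \<Rightarrow> nat \<Rightarrow> complex mat" where
  "proj_B n k = (1/2 :: complex) \<cdot>\<^sub>m (I2 + (if k = 0 then 1 else -1 :: complex) \<cdot>\<^sub>m dot_sigma n)"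

definition post_meas :: "complex mat \<Rightarrow> (nat \<Rightarrow> real) \<Rightarrow> nat \<Rightarrow> complex mat" where
  "post_meas \<rho> n k = kron I2 (proj_B n k) * \<rho> * kron I2 (proj_B n k)"

definition mtrace :: "complex mat \<Rightarrow> complex" where
  "mtrace M = (\<Sum>i<dim_row M. M $$ (i, i))"

definition meas_prob :: "complex mat \<Rightarrow> (nat \<Rightarrow> real) \<Rightarrow> nat \<Rightarrow> real" where
  "meas_prob \<rho> n k = Re (mtrace (post_meas \<rho> n k))"

definition cond_state_A :: "complex mat \<Rightarrow> (nat \<Rightarrow> real) \<Rightarrow> nat \<Rightarrow> complex mat" where
  "cond_state_A \<rho> n k = (1 / complex_of_real (meas_prob \<rho> n k)) \<cdot>\<^sub>m ptrace_B (post_meas \<rho> n k)"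

definition cond_entropy :: "complex mat \<Rightarrow> (nat \<Rightarrow> real) \<Rightarrow> real" where
  "cond_entropy \<rho> n = (\<Sum>k\<in>{0,1}. meas_prob \<rho> n k * vN_entropy (cond_state_A \<rho> n k))"

definition classical_corr :: "complex mat \<Rightarrow> real" where
  "classical_corr \<rho> = (SUP n\<in>unit3. vN_entropy (ptrace_B \<rho>) - cond_entropy \<rho> n)"

definition mutual_info :: "complex mat \<Rightarrow> real" where
  "mutual_info \<rho> = vN_entropy (ptrace_B \<rho>) + vN_entropy (ptrace_A \<rho>) - vN_entropy \<rho>"

definition discord :: "complex mat \<Rightarrow> real" where
  "discord \<rho> = mutual_info \<rho> - classical_corr \<rho>"

(* t_0^2 = max over unit e_0 in R^perp, R = span{T^t x, y}, of e_0^t T^t T e_0, T = diag t *)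
definition t0_sq :: "(nat \<Rightarrow> real) \<Rightarrow> (nat \<Rightarrow> real) \<Rightarrow> (nat \<Rightarrow> real) \<Rightarrow> real" where
  "t0_sq x y t = (SUP e\<in>{e \<in> unit3. dot3 e (\<lambda>i. t i * x i) = 0 \<and> dot3 e y = 0}.
                    (\<Sum>i\<in>{1..3}. (t i)^2 * (e i)^2))"

end

(*
  Measuring B along a unit vector n gives outcome k with probability (1 \<plusminus> y.n)/2 and leaves A
  in the qubit state with Bloch vector (x \<plusminus> T n)/(1 \<plusminus> y.n), whose entropy depends only on the
  length of that vector. Positivity of \<rho> is needed only to see that these lengths are at most 1.
  Take n = e\<^sub>0 in R\<^sup>\<bottom> attaining t\<^sub>0\<^sup>2 (the unit sphere of R\<^sup>\<bottom> is compact): y.e\<^sub>0 = 0 makes both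
  outcomes equally likely and (T x).e\<^sub>0 = 0 gives |x \<plusminus> T e\<^sub>0|\<^sup>2 = x\<^sup>2 + t\<^sub>0\<^sup>2, so the conditional
  entropy at e\<^sub>0 is exactly h\<^sub>2((1 + sqrt(x\<^sup>2 + t\<^sub>0\<^sup>2))/2).
*)

theory Submission
  imports Defs "HOL-Analysis.Topology_Euclidean_Space"
begin

lemma sum_lessThan_2: "(\<Sum>k<2::nat. f k) = f 0 + (f 1 :: 'a::comm_monoid_add)"
  by (simp add: eval_nat_numeral)

lemma sum_lessThan_4: "(\<Sum>k<4::nat. f k) = f 0 + f 1 + f 2 + (f 3 :: 'a::comm_monoid_add)"
  by (simp add: eval_nat_numeral add.assoc)

lemma sum_atLeastAtMost_1_3: "(\<Sum>i\<in>{1..3::nat}. f i) = f 1 + f 2 + (f 3 :: 'a::comm_monoid_add)"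
  by (simp add: eval_nat_numeral add.assoc)

lemma norm3_sq: "(norm3 a)\<^sup>2 = (a 1)\<^sup>2 + (a 2)\<^sup>2 + (a 3)\<^sup>2"
  unfolding norm3_def sum_atLeastAtMost_1_3 by simp

lemma norm3_nonneg: "0 \<le> norm3 a"
  by (simp add: norm3_def sum_nonneg)

lemma dot3_eq: "dot3 a b = a 1 * b 1 + a 2 * b 2 + a 3 * b 3"
  unfolding dot3_def sum_atLeastAtMost_1_3 ..

lemma unit3_iff: "n \<in> unit3 \<longleftrightarrow> (n 1)\<^sup>2 + (n 2)\<^sup>2 + (n 3)\<^sup>2 = 1"
  unfolding unit3_def sum_atLeastAtMost_1_3 by simp

subsection \<open>Two-by-two matrices\<close>

lemma mat2_eqI:
  assumes "A \<in> carrier_mat 2 2" "B \<in> carrier_mat 2 2"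
    "A $$ (0,0) = B $$ (0,0)" "A $$ (0,1) = B $$ (0,1)" "A $$ (1,0) = B $$ (1,0)" "A $$ (1,1) = B $$ (1,1)"
  shows "A = B"
proof (rule eq_matI)
  fix i j assume "i < dim_row B" "j < dim_col B"
  then have "(i = 0 \<or> i = 1) \<and> (j = 0 \<or> j = 1)" using assms by auto
  then show "A $$ (i, j) = B $$ (i, j)" using assms by auto
qed (use assms in auto)

lemma mat2_mult_entries:
  assumes "A \<in> carrier_mat 2 2" "B \<in> carrier_mat 2 2"
  shows "(A * B) $$ (0,0) = A $$ (0,0) * B $$ (0,0) + A $$ (0,1) * B $$ (1,0)"
    "(A * B) $$ (0,1) = A $$ (0,0) * B $$ (0,1) + A $$ (0,1) * B $$ (1,1)"
    "(A * B) $$ (1,0) = A $$ (1,0) * B $$ (0,0) + A $$ (1,1) * B $$ (1,0)"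
    "(A * B) $$ (1,1) = A $$ (1,0) * B $$ (0,1) + A $$ (1,1) * B $$ (1,1)"
  using assms by (simp_all add: scalar_prod_def atLeast0LessThan sum_lessThan_2)

lemma det_mat2:
  assumes "(A :: 'a :: comm_ring_1 mat) \<in> carrier_mat 2 2"
  shows "det A = A $$ (0,0) * A $$ (1,1) - A $$ (0,1) * A $$ (1,0)"
proof -
  have "det A = (\<Sum>i<2. A $$ (i,0) * cofactor A i 0)"
    by (rule laplace_expansion_column[OF assms]) simp
  also have "\<dots> = A $$ (0,0) * cofactor A 0 0 + A $$ (1,0) * cofactor A 1 0"
    by (simp add: sum_lessThan_2)
  also have "cofactor A 0 0 = A $$ (1,1)"
    unfolding cofactor_def using assms by (subst det_single) (auto simp: mat_delete_def)
  also have "cofactor A 1 0 = - A $$ (0,1)"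
    unfolding cofactor_def using assms by (subst det_single) (auto simp: mat_delete_def)
  finally show ?thesis by (simp add: algebra_simps)
qed

lemma char_poly_mat2:
  assumes A: "(A :: complex mat) \<in> carrier_mat 2 2"
    and tr: "A $$ (0,0) + A $$ (1,1) = l1 + l2"
    and dt: "A $$ (0,0) * A $$ (1,1) - A $$ (0,1) * A $$ (1,0) = l1 * l2"
  shows "char_poly A = [:-l1, 1:] * [:-l2, 1:]"
proof -
  have "char_poly A = ([:0,1:] + [:-A $$ (0,0):]) * ([:0,1:] + [:-A $$ (1,1):])
                      - [:-A $$ (0,1):] * [:-A $$ (1,0):]"
    unfolding char_poly_def by (subst det_mat2) (use A in \<open>auto simp: char_poly_matrix_def\<close>)
  also have "\<dots> = [:-l1, 1:] * [:-l2, 1:]"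
    using tr dt by (simp add: algebra_simps)
  finally show ?thesis .
qed

lemma vN_entropy_mat2:
  assumes "(A :: complex mat) \<in> carrier_mat 2 2"
    and "A $$ (0,0) + A $$ (1,1) = l1 + l2"
    and "A $$ (0,0) * A $$ (1,1) - A $$ (0,1) * A $$ (1,0) = l1 * l2"
  shows "vN_entropy A = - eta (Re l1) - eta (Re l2)"
  unfolding vN_entropy_def char_poly_mat2[OF assms] by (subst proots_mult) auto

lemma psd_mat2_form:
  assumes "psd A" "A \<in> carrier_mat 2 2"
  shows "0 \<le> Re (cnj u0 * A $$ (0,0) * u0 + cnj u0 * A $$ (0,1) * u1
                 + cnj u1 * A $$ (1,0) * u0 + cnj u1 * A $$ (1,1) * u1)"
  using spec[OF assms(1)[unfolded psd_def], of "\<lambda>i. if i = 0 then u0 else u1"] assms(2)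
  by (simp add: sum_lessThan_2 add.assoc)

lemma psd_smult_pos:
  assumes "0 < c" "psd (complex_of_real c \<cdot>\<^sub>m A)"
  shows "psd A"
  unfolding psd_def
proof
  fix v :: "nat \<Rightarrow> complex"
  have eq: "(\<Sum>i<dim_row A. \<Sum>j<dim_col A. cnj (v i) * (complex_of_real c \<cdot>\<^sub>m A) $$ (i,j) * v j)
      = complex_of_real c * (\<Sum>i<dim_row A. \<Sum>j<dim_col A. cnj (v i) * A $$ (i,j) * v j)"
    by (simp add: sum_distrib_left algebra_simps)
  have "0 \<le> Re (\<Sum>i<dim_row A. \<Sum>j<dim_col A. cnj (v i) * (complex_of_real c \<cdot>\<^sub>m A) $$ (i,j) * v j)"
    using assms(2) unfolding psd_def index_smult_mat(2,3) by blast
  then have "0 \<le> c * Re (\<Sum>i<dim_row A. \<Sum>j<dim_col A. cnj (v i) * A $$ (i,j) * v j)"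
    unfolding eq by simp
  then show "0 \<le> Re (\<Sum>i<dim_row A. \<Sum>j<dim_col A. cnj (v i) * A $$ (i,j) * v j)"
    using assms(1) by (simp add: zero_le_mult_iff)
qed

subsection \<open>Pauli matrices and qubit states\<close>

lemma pauli_carrier [simp]: "pauli i \<in> carrier_mat 2 2"
  unfolding pauli_def mat_of_rows_list_def by (simp add: numeral_2_eq_2)

lemma dot_sigma_carrier [simp]: "dot_sigma a \<in> carrier_mat 2 2"
  by (simp add: dot_sigma_def)

lemma I2_carrier [simp]: "I2 \<in> carrier_mat 2 2"
  by (simp add: I2_def)

lemma pauli_dims [simp]: "dim_row (pauli i) = 2" "dim_col (pauli i) = 2"
  by (simp_all add: pauli_def mat_of_rows_list_def)

lemma dot_sigma_dims [simp]: "dim_row (dot_sigma a) = 2" "dim_col (dot_sigma a) = 2"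
  by (simp_all add: dot_sigma_def)

lemma I2_dims [simp]: "dim_row I2 = 2" "dim_col I2 = 2"
  by (simp_all add: I2_def)

lemma pauli_entries:
  "pauli 1 $$ (0,0) = 0" "pauli 1 $$ (0,1) = 1" "pauli 1 $$ (1,0) = 1" "pauli 1 $$ (1,1) = 0"
  "pauli 2 $$ (0,0) = 0" "pauli 2 $$ (0,1) = -\<i>" "pauli 2 $$ (1,0) = \<i>" "pauli 2 $$ (1,1) = 0"
  "pauli 3 $$ (0,0) = 1" "pauli 3 $$ (0,1) = 0" "pauli 3 $$ (1,0) = 0" "pauli 3 $$ (1,1) = -1"
  by (simp_all add: pauli_def mat_of_rows_list_def)

lemma I2_entries: "I2 $$ (0,0) = 1" "I2 $$ (0,1) = 0" "I2 $$ (1,0) = 0" "I2 $$ (1,1) = 1"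
  by (simp_all add: I2_def)

lemma dot_sigma_entries:
  "dot_sigma a $$ (0,0) = complex_of_real (a 3)"
  "dot_sigma a $$ (0,1) = complex_of_real (a 1) - \<i> * complex_of_real (a 2)"
  "dot_sigma a $$ (1,0) = complex_of_real (a 1) + \<i> * complex_of_real (a 2)"
  "dot_sigma a $$ (1,1) = - complex_of_real (a 3)"
  by (simp_all add: dot_sigma_def pauli_entries pauli_entries[unfolded One_nat_def] algebra_simps)

lemma times_conj_eq_sum_sq:
  "(complex_of_real b - \<i> * complex_of_real c) * (complex_of_real b + \<i> * complex_of_real c)
     = complex_of_real (b\<^sup>2 + c\<^sup>2)"
  by (simp add: complex_eq_iff power2_eq_square)

text \<open>A qubit state whose Bloch vector has length \<open>r\<close> has eigenvalues \<open>(1 \<plusminus> r)/2\<close>.\<close>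

definition bloch_entropy :: "real \<Rightarrow> real" where
  "bloch_entropy r = - eta ((1 + r) / 2) - eta ((1 - r) / 2)"

lemma vN_entropy_bloch_state:
  "vN_entropy ((1/2) \<cdot>\<^sub>m (I2 + dot_sigma a)) = bloch_entropy (norm3 a)"
proof -
  let ?A = "(1/2 :: complex) \<cdot>\<^sub>m (I2 + dot_sigma a)"
  let ?l1 = "complex_of_real ((1 + norm3 a) / 2)" and ?l2 = "complex_of_real ((1 - norm3 a) / 2)"
  have e: "?A $$ (i,j) = (I2 $$ (i,j) + dot_sigma a $$ (i,j)) / 2" if "i < 2" "j < 2" for i j
    using that by simp
  have tr: "?A $$ (0,0) + ?A $$ (1,1) = ?l1 + ?l2"
    by (simp add: e I2_entries dot_sigma_entries del: One_nat_def) (simp add: field_simps)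
  have dt: "?A $$ (0,0) * ?A $$ (1,1) - ?A $$ (0,1) * ?A $$ (1,0) = ?l1 * ?l2"
  proof -
    have "?A $$ (0,0) * ?A $$ (1,1) - ?A $$ (0,1) * ?A $$ (1,0)
        = complex_of_real ((1 - ((a 1)\<^sup>2 + (a 2)\<^sup>2 + (a 3)\<^sup>2)) / 4)"
      by (simp add: e I2_entries dot_sigma_entries times_conj_eq_sum_sq[simplified] del: One_nat_def)
         (simp add: field_simps power2_eq_square)
    also have "\<dots> = ?l1 * ?l2"
      unfolding norm3_sq[symmetric] by (simp add: field_simps power2_eq_square)
    finally show ?thesis .
  qed
  show ?thesis
    unfolding bloch_entropy_def by (subst vN_entropy_mat2[OF _ tr dt]) simp_all
qed

lemma norm3_le_of_psd_bloch:
  assumes "psd (complex_of_real c \<cdot>\<^sub>m I2 + dot_sigma w)"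
  shows "norm3 w \<le> c"
proof -
  define N where "N = norm3 w"
  have N0: "0 \<le> N" and N2: "N\<^sup>2 = (w 1)\<^sup>2 + (w 2)\<^sup>2 + (w 3)\<^sup>2"
    unfolding N_def by (simp_all add: norm3_nonneg norm3_sq)
  have s12: "(w 1)\<^sup>2 + (w 2)\<^sup>2 = N\<^sup>2 - (w 3)\<^sup>2" using N2 by simp
  have w3N: "\<bar>w 3\<bar> \<le> N"
    using N0 N2 by (metis abs_le_square_iff add.commute le_add_same_cancel1 sum_power2_ge_zero abs_of_nonneg)
  have form: "0 \<le> Re (cnj u0 * complex_of_real (c + w 3) * u0
        + cnj u0 * (complex_of_real (w 1) - \<i> * complex_of_real (w 2)) * u1
        + cnj u1 * (complex_of_real (w 1) + \<i> * complex_of_real (w 2)) * u0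
        + cnj u1 * complex_of_real (c - w 3) * u1)" for u0 u1
    using psd_mat2_form[OF assms, of u0 u1]
    by (simp add: I2_entries dot_sigma_entries del: One_nat_def)
  show ?thesis
  proof (cases "N + w 3 = 0")
    case True
    then show ?thesis using form[of 1 0] by (simp add: N_def)
  next
    case False
    then have pos: "N + w 3 > 0" using w3N by simp
    txt \<open>This vector is an eigenvector of \<open>w\<cdot>\<sigma>\<close> for the eigenvalue \<open>-|w|\<close>.\<close>
    have "0 \<le> (c + w 3) * ((w 1)\<^sup>2 + (w 2)\<^sup>2) - 2 * (N + w 3) * ((w 1)\<^sup>2 + (w 2)\<^sup>2)
              + (c - w 3) * (N + w 3)\<^sup>2"
      using form[of "complex_of_real (w 1) - \<i> * complex_of_real (w 2)" "- complex_of_real (N + w 3)"]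
      by (simp add: algebra_simps power2_eq_square)
    also have "\<dots> = (N + w 3) * (2 * N * (c - N))"
      unfolding s12 by (simp add: algebra_simps power2_eq_square)
    finally have "0 \<le> 2 * N * (c - N)" using pos by (simp add: zero_le_mult_iff)
    moreover have "N > 0" using pos w3N by simp
    ultimately show ?thesis by (simp add: zero_le_mult_iff N_def)
  qed
qed

lemma h2_eq_bloch_entropy:
  assumes "0 \<le> r" "r \<le> 1"
  shows "h2 ((1 + r) / 2) = bloch_entropy r"
proof (cases "r = 1")
  case False
  have e: "1 - (1 + r) / 2 = (1 - r) / 2" by (simp add: field_simps)
  have "0 < (1 - r) / 2" "0 < (1 + r) / 2" using False assms by simp_all
  then show ?thesis unfolding h2_def bloch_entropy_def eta_def e by simp
qed (simp add: h2_def bloch_entropy_def eta_def)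

lemma eta_nonpos:
  assumes "p \<le> 1"
  shows "eta p \<le> 0"
  using assms by (simp add: eta_def mult_nonneg_nonpos)

lemma bloch_entropy_nonneg:
  assumes "0 \<le> r" "r \<le> 1"
  shows "0 \<le> bloch_entropy r"
  using eta_nonpos[of "(1 + r) / 2"] eta_nonpos[of "(1 - r) / 2"] assms
  by (simp add: bloch_entropy_def)

subsection \<open>Projective measurements on the second qubit\<close>

definition meas_sign :: "nat \<Rightarrow> real" where
  "meas_sign k = (if k = 0 then 1 else -1)"

lemma meas_sign_sq: "meas_sign k * meas_sign k = 1"
  by (simp add: meas_sign_def)

lemma meas_sign_mult_cancel: "meas_sign k * (meas_sign k * a) = a"
  by (simp add: meas_sign_def)

lemma proj_B_carrier [simp]: "proj_B n k \<in> carrier_mat 2 2"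
  unfolding proj_B_def by simp

lemma proj_B_dims [simp]: "dim_row (proj_B n k) = 2" "dim_col (proj_B n k) = 2"
  unfolding proj_B_def by simp_all

lemma proj_B_entries:
  "proj_B n k $$ (0,0) = (1 + complex_of_real (meas_sign k) * complex_of_real (n 3)) / 2"
  "proj_B n k $$ (0,1) = complex_of_real (meas_sign k) * (complex_of_real (n 1) - \<i> * complex_of_real (n 2)) / 2"
  "proj_B n k $$ (1,0) = complex_of_real (meas_sign k) * (complex_of_real (n 1) + \<i> * complex_of_real (n 2)) / 2"
  "proj_B n k $$ (1,1) = (1 - complex_of_real (meas_sign k) * complex_of_real (n 3)) / 2"
  by (simp_all add: proj_B_def meas_sign_def I2_entries dot_sigma_entries del: One_nat_def)

lemma projector2_idem_entries:
  fixes s d z w :: complex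
  assumes s: "s * s = 1" and zw: "z * w = 1 - d * d"
  shows "(1 + s * d) / 2 * ((1 + s * d) / 2) + s * z / 2 * (s * w / 2) = (1 + s * d) / 2"
    "(1 + s * d) / 2 * (s * z / 2) + s * z / 2 * ((1 - s * d) / 2) = s * z / 2"
    "s * w / 2 * ((1 + s * d) / 2) + (1 - s * d) / 2 * (s * w / 2) = s * w / 2"
    "s * w / 2 * (s * z / 2) + (1 - s * d) / 2 * ((1 - s * d) / 2) = (1 - s * d) / 2"
proof -
  have "(1 + s * d) / 2 * ((1 + s * d) / 2) + s * z / 2 * (s * w / 2)
      = (1 + 2 * s * d + (s * s) * (d * d) + (s * s) * (z * w)) / 4"
    by (simp add: field_simps)
  also have "\<dots> = (1 + s * d) / 2"
    unfolding s zw by (simp add: field_simps)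
  finally show "(1 + s * d) / 2 * ((1 + s * d) / 2) + s * z / 2 * (s * w / 2) = (1 + s * d) / 2" .
  have "s * w / 2 * (s * z / 2) + (1 - s * d) / 2 * ((1 - s * d) / 2)
      = (1 - 2 * s * d + (s * s) * (d * d) + (s * s) * (z * w)) / 4"
    by (simp add: field_simps)
  also have "\<dots> = (1 - s * d) / 2"
    unfolding s zw by (simp add: field_simps)
  finally show "s * w / 2 * (s * z / 2) + (1 - s * d) / 2 * ((1 - s * d) / 2) = (1 - s * d) / 2" .
qed (simp_all add: field_simps)

lemma proj_B_idem:
  assumes "n \<in> unit3"
  shows "proj_B n k * proj_B n k = proj_B n k"
proof -
  have s: "complex_of_real (meas_sign k) * complex_of_real (meas_sign k) = 1"
    by (simp flip: of_real_mult add: meas_sign_sq)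
  have "(n 1)\<^sup>2 + (n 2)\<^sup>2 = 1 - (n 3)\<^sup>2"
    using assms unfolding unit3_iff by simp
  then have zw: "(complex_of_real (n 1) - \<i> * complex_of_real (n 2)) * (complex_of_real (n 1) + \<i> * complex_of_real (n 2))
      = 1 - complex_of_real (n 3) * complex_of_real (n 3)"
    unfolding times_conj_eq_sum_sq by (simp add: power2_eq_square)
  show ?thesis
    by (rule mat2_eqI[OF mult_carrier_mat[OF proj_B_carrier proj_B_carrier] proj_B_carrier])
       (simp_all only: mat2_mult_entries[OF proj_B_carrier proj_B_carrier] proj_B_entries
          projector2_idem_entries[OF s zw])
qed

lemma proj_B_hermitian:
  assumes "a < 2" "b < 2"
  shows "cnj (proj_B n k $$ (a,b)) = proj_B n k $$ (b,a)"
proof -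
  have "(a = 0 \<or> a = 1) \<and> (b = 0 \<or> b = 1)" using assms by auto
  then show ?thesis by (elim conjE disjE) (simp_all add: proj_B_entries del: One_nat_def)
qed

subsection \<open>Partial trace of a locally projected state\<close>

lemma kron_I2_entry:
  assumes "P \<in> carrier_mat 2 2" "a < 4" "b < 4"
  shows "kron I2 P $$ (a,b) = (if a div 2 = b div 2 then P $$ (a mod 2, b mod 2) else 0)"
  using assms by (auto simp: kron_def I2_def)

lemma kron_dims [simp]:
  "dim_row (kron A B) = dim_row A * dim_row B" "dim_col (kron A B) = dim_col A * dim_col B"
  by (simp_all add: kron_def)

lemma kron_carrier:
  assumes "A \<in> carrier_mat 2 2" "B \<in> carrier_mat 2 2"
  shows "kron A B \<in> carrier_mat 4 4"
  using assms unfolding carrier_mat_def by simp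

lemma ptrace_B_carrier [simp]: "ptrace_B M \<in> carrier_mat 2 2"
  unfolding ptrace_B_def by simp

lemma ptrace_B_dims [simp]: "dim_row (ptrace_B M) = 2" "dim_col (ptrace_B M) = 2"
  unfolding ptrace_B_def by simp_all

text \<open>For a projector \<open>P\<close>, \<open>Tr\<^sub>B[(I \<otimes> P) M (I \<otimes> P)] = Tr\<^sub>B[M (I \<otimes> P)]\<close>.\<close>

lemma ptrace_B_compression:
  assumes M: "M \<in> carrier_mat 4 4" and P: "P \<in> carrier_mat 2 2" and PP: "P * P = P"
    and i: "i < 2" and j: "j < 2"
  shows "ptrace_B (kron I2 P * M * kron I2 P) $$ (i,j)
           = (\<Sum>b<2. \<Sum>b'<2. M $$ (2*i+b, 2*j+b') * P $$ (b',b))"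
proof -
  have pp: "P $$ (a,0) * P $$ (0,c) + P $$ (a,1) * P $$ (1,c) = P $$ (a,c)" if "a < 2" "c < 2" for a c
  proof -
    have "(P * P) $$ (a,c) = P $$ (a,c)" using PP by simp
    then show ?thesis using P that by (simp add: scalar_prod_def atLeast0LessThan sum_lessThan_2)
  qed
  have e: "(kron I2 P * M * kron I2 P) $$ (a,c)
             = (\<Sum>k<4. \<Sum>l<4. kron I2 P $$ (a,k) * M $$ (k,l) * kron I2 P $$ (l,c))"
    if "a < 4" "c < 4" for a c
    using that M P
    by (simp add: scalar_prod_def sum_distrib_left sum_distrib_right mult.assoc atLeast0LessThan)
       (rule sum.swap)
  have ij: "(i = 0 \<or> i = 1) \<and> (j = 0 \<or> j = 1)" using i j by auto
  have "ptrace_B (kron I2 P * M * kron I2 P) $$ (i,j)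
      = (\<Sum>k<4. \<Sum>l<4. kron I2 P $$ (2*i,k) * M $$ (k,l) * kron I2 P $$ (l,2*j))
        + (\<Sum>k<4. \<Sum>l<4. kron I2 P $$ (2*i+1,k) * M $$ (k,l) * kron I2 P $$ (l,2*j+1))"
    using i j by (simp add: ptrace_B_def e)
  also have "\<dots> = (\<Sum>b<2. \<Sum>b'<2. M $$ (2*i+b, 2*j+b') * (P $$ (b',0) * P $$ (0,b) + P $$ (b',1) * P $$ (1,b)))"
    using ij P unfolding sum_lessThan_4 sum_lessThan_2
    by (elim disjE conjE; simp add: kron_I2_entry; simp add: algebra_simps)
  also have "\<dots> = (\<Sum>b<2. \<Sum>b'<2. M $$ (2*i+b, 2*j+b') * P $$ (b',b))"
    using pp by (intro sum.cong refl) auto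
  finally show ?thesis .
qed

text \<open>With \<open>V\<^sub>c(2i+b) = u(i) P(b,c)\<close>, the form of the partial trace is \<open>\<Sum>\<^sub>c\<close> of the forms of \<open>M\<close> at \<open>V\<^sub>c\<close>.\<close>

lemma psd_ptrace_B_compression:
  assumes M: "M \<in> carrier_mat 4 4" and psd: "psd M"
    and P: "P \<in> carrier_mat 2 2" and PP: "P * P = P"
    and herm: "\<And>a b. a < 2 \<Longrightarrow> b < 2 \<Longrightarrow> cnj (P $$ (a,b)) = P $$ (b,a)"
  shows "psd (ptrace_B (kron I2 P * M * kron I2 P))"
  unfolding psd_def
proof
  fix u :: "nat \<Rightarrow> complex"
  define V where "V c p = u (p div 2) * P $$ (p mod 2, c)" for c p
  have pp: "(\<Sum>c<2. cnj (P $$ (b,c)) * P $$ (b',c)) = P $$ (b',b)" if "b < 2" "b' < 2" for b b'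
  proof -
    have "(\<Sum>c<2. cnj (P $$ (b,c)) * P $$ (b',c)) = (P * P) $$ (b',b)"
      using that P by (simp add: herm scalar_prod_def atLeast0LessThan mult.commute)
    then show ?thesis using PP by simp
  qed
  have q: "0 \<le> Re (\<Sum>p<4. \<Sum>q<4. cnj (V c p) * M $$ (p,q) * V c q)" for c
    using spec[OF psd[unfolded psd_def], of "V c"] M by simp
  have sum4_split: "(\<Sum>p<4::nat. f p) = (\<Sum>i<2::nat. \<Sum>b<2::nat. f (2*i+b))" for f :: "nat \<Rightarrow> complex"
    by (simp add: sum_lessThan_4 sum_lessThan_2 add.assoc)
  have "(\<Sum>c<2. \<Sum>p<4. \<Sum>q<4. cnj (V c p) * M $$ (p,q) * V c q)
      = (\<Sum>i<2. \<Sum>b<2. \<Sum>j<2. \<Sum>b'<2. cnj (u i) * M $$ (2*i+b, 2*j+b') * u j *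
           (\<Sum>c<2. cnj (P $$ (b,c)) * P $$ (b',c)))"
    unfolding V_def sum4_split by (simp add: sum_lessThan_2 algebra_simps)
  also have "\<dots> = (\<Sum>i<2. \<Sum>b<2. \<Sum>j<2. \<Sum>b'<2. cnj (u i) * M $$ (2*i+b, 2*j+b') * u j * P $$ (b',b))"
    by (intro sum.cong refl) (simp add: pp)
  also have "\<dots> = (\<Sum>i<2. \<Sum>j<2. cnj (u i) * ptrace_B (kron I2 P * M * kron I2 P) $$ (i,j) * u j)"
    by (simp add: ptrace_B_compression[OF M P PP] sum_lessThan_2 algebra_simps)
  finally have form: "(\<Sum>i<2. \<Sum>j<2. cnj (u i) * ptrace_B (kron I2 P * M * kron I2 P) $$ (i,j) * u j)
      = (\<Sum>c<2. \<Sum>p<4. \<Sum>q<4. cnj (V c p) * M $$ (p,q) * V c q)" ..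
  show "0 \<le> Re (\<Sum>i<dim_row (ptrace_B (kron I2 P * M * kron I2 P)).
                   \<Sum>j<dim_col (ptrace_B (kron I2 P * M * kron I2 P)).
                     cnj (u i) * ptrace_B (kron I2 P * M * kron I2 P) $$ (i,j) * u j)"
    unfolding ptrace_B_dims form using q[of 0] q[of 1]
    by (simp only: sum_lessThan_2 plus_complex.sel)
qed

subsection \<open>Measuring the state \<open>\<rho>\<^sup>A\<^sup>B\<close>\<close>

text \<open>Outcome \<open>k\<close> of the measurement along \<open>n\<close> leaves \<open>A\<close> in \<open>(I + (x \<plusminus> T n)\<cdot>\<sigma>/(1 \<plusminus> y\<cdot>n))/2\<close>
  and occurs with probability \<open>(1 \<plusminus> y\<cdot>n)/2\<close>.\<close>

definition meas_weight :: "(nat \<Rightarrow> real) \<Rightarrow> (nat \<Rightarrow> real) \<Rightarrow> nat \<Rightarrow> real" where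
  "meas_weight y n k = 1 + meas_sign k * dot3 y n"

definition meas_bloch :: "(nat \<Rightarrow> real) \<Rightarrow> (nat \<Rightarrow> real) \<Rightarrow> (nat \<Rightarrow> real) \<Rightarrow> nat \<Rightarrow> nat \<Rightarrow> real" where
  "meas_bloch x t n k = (\<lambda>i. x i + meas_sign k * t i * n i)"

lemma rho_AB_carrier [simp]: "rho_AB x y t \<in> carrier_mat 4 4"
  unfolding rho_AB_def by (intro smult_carrier_mat add_carrier_mat kron_carrier) simp_all

lemma rho_AB_entry:
  assumes "p < 4" "q < 4"
  shows "rho_AB x y t $$ (p,q) = 1/4 * (
      I2 $$ (p div 2, q div 2) * I2 $$ (p mod 2, q mod 2)
    + dot_sigma x $$ (p div 2, q div 2) * I2 $$ (p mod 2, q mod 2)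
    + I2 $$ (p div 2, q div 2) * dot_sigma y $$ (p mod 2, q mod 2)
    + complex_of_real (t 1) * (pauli 1 $$ (p div 2, q div 2) * pauli 1 $$ (p mod 2, q mod 2))
    + complex_of_real (t 2) * (pauli 2 $$ (p div 2, q div 2) * pauli 2 $$ (p mod 2, q mod 2))
    + complex_of_real (t 3) * (pauli 3 $$ (p div 2, q div 2) * pauli 3 $$ (p mod 2, q mod 2)))"
  using assms unfolding rho_AB_def by (simp add: kron_def)

lemma ptrace_B_post_meas_rho_AB:
  assumes n: "n \<in> unit3"
  shows "ptrace_B (post_meas (rho_AB x y t) n k)
           = (1/4) \<cdot>\<^sub>m (complex_of_real (meas_weight y n k) \<cdot>\<^sub>m I2 + dot_sigma (meas_bloch x t n k))"
proof -
  have e: "ptrace_B (post_meas (rho_AB x y t) n k) $$ (i,j)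
             = (\<Sum>b<2. \<Sum>b'<2. rho_AB x y t $$ (2*i+b, 2*j+b') * proj_B n k $$ (b',b))"
    if "i < 2" "j < 2" for i j
    unfolding post_meas_def using that
    by (intro ptrace_B_compression proj_B_idem n) simp_all
  note entries = e sum_lessThan_2 rho_AB_entry pauli_entries I2_entries dot_sigma_entries
    proj_B_entries dot3_eq meas_weight_def meas_bloch_def
  show ?thesis
    by (rule mat2_eqI; simp add: entries entries[unfolded One_nat_def];
        simp add: complex_eq_iff; simp add: field_simps)
qed

lemma meas_prob_rho_AB:
  assumes "n \<in> unit3"
  shows "meas_prob (rho_AB x y t) n k = meas_weight y n k / 2"
proof -
  let ?M = "post_meas (rho_AB x y t) n k"
  have "mtrace ?M = ptrace_B ?M $$ (0,0) + ptrace_B ?M $$ (1,1)"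
    unfolding mtrace_def ptrace_B_def post_meas_def
    by (simp add: kron_carrier[of I2 "proj_B n k", simplified] sum_lessThan_4 add.assoc)
  also have "\<dots> = complex_of_real (meas_weight y n k / 2)"
    by (simp add: ptrace_B_post_meas_rho_AB[OF assms] I2_entries dot_sigma_entries del: One_nat_def)
       (simp add: field_simps)
  finally show ?thesis unfolding meas_prob_def by (simp only: Re_complex_of_real)
qed

lemma norm3_meas_bloch_le:
  assumes psd: "psd (rho_AB x y t)" and n: "n \<in> unit3"
  shows "norm3 (meas_bloch x t n k) \<le> meas_weight y n k"
proof (rule norm3_le_of_psd_bloch, rule psd_smult_pos)
  have "psd (ptrace_B (post_meas (rho_AB x y t) n k))"
    unfolding post_meas_def
    by (intro psd_ptrace_B_compression psd proj_B_idem n proj_B_hermitian) simp_all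
  then show "psd (complex_of_real (1/4) \<cdot>\<^sub>m
               (complex_of_real (meas_weight y n k) \<cdot>\<^sub>m I2 + dot_sigma (meas_bloch x t n k)))"
    by (simp add: ptrace_B_post_meas_rho_AB[OF n])
qed simp

lemma cond_state_A_rho_AB:
  assumes n: "n \<in> unit3" and w: "meas_weight y n k \<noteq> 0"
  shows "cond_state_A (rho_AB x y t) n k
           = (1/2) \<cdot>\<^sub>m (I2 + dot_sigma (\<lambda>i. meas_bloch x t n k i / meas_weight y n k))"
  unfolding cond_state_A_def meas_prob_rho_AB[OF n] ptrace_B_post_meas_rho_AB[OF n]
  using w by (intro mat2_eqI)
    (simp_all add: I2_entries dot_sigma_entries I2_entries[unfolded One_nat_def]
      dot_sigma_entries[unfolded One_nat_def] field_simps)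

lemma norm3_scale: "norm3 (\<lambda>i. a i / c) = norm3 a / \<bar>c\<bar>"
  by (simp add: norm3_def power_divide sum_divide_distrib[symmetric] real_sqrt_divide)

lemma cond_entropy_rho_AB:
  assumes psd: "psd (rho_AB x y t)" and n: "n \<in> unit3"
  shows "cond_entropy (rho_AB x y t) n
           = (\<Sum>k\<in>{0,1}. meas_weight y n k / 2
                 * bloch_entropy (norm3 (meas_bloch x t n k) / meas_weight y n k))"
  unfolding cond_entropy_def
proof (intro sum.cong refl)
  fix k
  show "meas_prob (rho_AB x y t) n k * vN_entropy (cond_state_A (rho_AB x y t) n k)
      = meas_weight y n k / 2 * bloch_entropy (norm3 (meas_bloch x t n k) / meas_weight y n k)"
  proof (cases "meas_weight y n k = 0")
    case False
    then have "0 < meas_weight y n k"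
      using norm3_meas_bloch_le[OF psd n, of k] norm3_nonneg[of "meas_bloch x t n k"] by linarith
    then show ?thesis
      by (simp add: meas_prob_rho_AB[OF n] cond_state_A_rho_AB[OF n] vN_entropy_bloch_state norm3_scale)
  qed (simp add: meas_prob_rho_AB[OF n])
qed

lemma cond_entropy_rho_AB_nonneg:
  assumes psd: "psd (rho_AB x y t)" and n: "n \<in> unit3"
  shows "0 \<le> cond_entropy (rho_AB x y t) n"
proof -
  have "0 \<le> meas_weight y n k / 2 * bloch_entropy (norm3 (meas_bloch x t n k) / meas_weight y n k)" for k
  proof -
    have "norm3 (meas_bloch x t n k) \<le> meas_weight y n k" "0 \<le> norm3 (meas_bloch x t n k)"
      using norm3_meas_bloch_le[OF psd n] norm3_nonneg by auto
    then show ?thesis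
      by (cases "meas_weight y n k = 0") (simp_all add: bloch_entropy_nonneg divide_le_eq_1)
  qed
  then show ?thesis by (simp add: cond_entropy_rho_AB[OF psd n])
qed

lemma cond_entropy_rho_AB_orthogonal:
  assumes psd: "psd (rho_AB x y t)" and e: "e \<in> unit3"
    and o1: "dot3 e (\<lambda>i. t i * x i) = 0" and o2: "dot3 e y = 0"
  shows "cond_entropy (rho_AB x y t) e
           = h2 ((1 + sqrt ((norm3 x)\<^sup>2 + (\<Sum>i\<in>{1..3}. (t i)\<^sup>2 * (e i)\<^sup>2))) / 2)"
proof -
  define N where "N = sqrt ((norm3 x)\<^sup>2 + (\<Sum>i\<in>{1..3}. (t i)\<^sup>2 * (e i)\<^sup>2))"
  have w: "meas_weight y e k = 1" for k
    using o2 by (simp add: meas_weight_def dot3_eq mult.commute)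
  have b: "norm3 (meas_bloch x t e k) = N" for k
  proof -
    have "(norm3 (meas_bloch x t e k))\<^sup>2 = (norm3 x)\<^sup>2 + (\<Sum>i\<in>{1..3}. (t i)\<^sup>2 * (e i)\<^sup>2)
            + 2 * meas_sign k * dot3 e (\<lambda>i. t i * x i)"
      unfolding norm3_sq meas_bloch_def dot3_eq sum_atLeastAtMost_1_3
      by (simp add: algebra_simps power2_eq_square meas_sign_mult_cancel)
    then show ?thesis
      unfolding N_def o1 by (simp add: real_sqrt_unique norm3_nonneg)
  qed
  have "0 \<le> N"
    unfolding N_def by (simp add: sum_nonneg)
  have "N \<le> 1"
    using norm3_meas_bloch_le[OF psd e, of 0] unfolding b w .
  then show ?thesis
    unfolding cond_entropy_rho_AB[OF psd e] w b N_def[symmetric] h2_eq_bloch_entropy[OF \<open>0 \<le> N\<close> \<open>N \<le> 1\<close>]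
    by simp
qed

subsection \<open>The optimal direction \<open>e\<^sub>0\<close>\<close>

lemma exists_orthogonal_unit:
  fixes U Y :: "real \<times> real \<times> real"
  shows "\<exists>z. norm z = 1 \<and> inner z U = 0 \<and> inner z Y = 0"
proof -
  have "dim {U, Y} \<le> card {U, Y}" by (rule dim_le_card) (auto intro: span_base)
  also have "card {U, Y} \<le> 2" by (simp add: card_insert_if)
  finally have "dim {U, Y} < DIM(real \<times> real \<times> real)" by simp
  then obtain z where z: "z \<noteq> 0" "\<And>w. w \<in> span {U, Y} \<Longrightarrow> orthogonal z w"
    by (rule orthogonal_to_subspace_exists, blast)
  have "U \<in> span {U, Y}" "Y \<in> span {U, Y}" by (auto intro: span_base)
  then show ?thesis
    using z by (intro exI[of _ "z /\<^sub>R norm z"]) (auto simp: orthogonal_def)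
qed

lemma t0_sq_attained:
  "\<exists>e \<in> {e \<in> unit3. dot3 e (\<lambda>i. t i * x i) = 0 \<and> dot3 e y = 0}.
      (\<Sum>i\<in>{1..3}. (t i)\<^sup>2 * (e i)\<^sup>2) = t0_sq x y t"
proof -
  define E where "E = {e \<in> unit3. dot3 e (\<lambda>i. t i * x i) = 0 \<and> dot3 e y = 0}"
  define F where "F e = (\<Sum>i\<in>{1..3::nat}. (t i)\<^sup>2 * (e i)\<^sup>2)" for e :: "nat \<Rightarrow> real"
  define vec where "vec e = (e 1, e 2, e 3)" for e :: "nat \<Rightarrow> real"
  define fn where "fn p = (\<lambda>i::nat. if i = 1 then fst p else if i = 2 then fst (snd p) else snd (snd p))"
    for p :: "real \<times> real \<times> real"
  define K where "K = sphere 0 1 \<inter> {p. inner (vec (\<lambda>i. t i * x i)) p = 0} \<inter> {p. inner (vec y) p = 0}"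
  have inner_vec: "inner (vec a) p = dot3 (fn p) a" for a p
    by (cases p) (simp add: vec_def fn_def dot3_eq algebra_simps)
  have fn_K: "fn p \<in> E" if "p \<in> K" for p
    using that unfolding K_def E_def
    by (cases p) (simp add: unit3_iff fn_def inner_vec norm_eq_1 power2_eq_square add.assoc)
  have vec_E: "vec e \<in> K" "fn (vec e) \<in> E" "F (fn (vec e)) = F e" if "e \<in> E" for e
  proof -
    show "vec e \<in> K"
      using that unfolding K_def E_def
      by (simp add: unit3_iff norm_eq_1 vec_def dot3_eq power2_eq_square add.assoc algebra_simps)
    then show "fn (vec e) \<in> E" by (rule fn_K)
    show "F (fn (vec e)) = F e" unfolding F_def sum_atLeastAtMost_1_3 by (simp add: fn_def vec_def)
  qed
  have "compact K" unfolding K_def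
    by (intro compact_Int_closed closed_hyperplane compact_sphere)
  moreover obtain z where "z \<in> K"
    using exists_orthogonal_unit[of "vec (\<lambda>i. t i * x i)" "vec y"]
    by (auto simp: K_def inner_commute)
  moreover have "continuous_on K (F \<circ> fn)"
    unfolding F_def sum_atLeastAtMost_1_3 by (auto simp: fn_def o_def intro!: continuous_intros)
  ultimately obtain p where p: "p \<in> K" "\<And>q. q \<in> K \<Longrightarrow> F (fn q) \<le> F (fn p)"
    using continuous_attains_sup[of K "F \<circ> fn"] by fastforce
  have "F e \<le> F (fn p)" if "e \<in> E" for e
    using p(2)[OF vec_E(1)[OF that]] vec_E(3)[OF that] by simp
  then have "t0_sq x y t = F (fn p)"
    unfolding t0_sq_def E_def[symmetric] F_def[symmetric]
    by (intro cSup_eq_maximum) (auto intro: fn_K[OF p(1)])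
  then show ?thesis using fn_K[OF p(1)] unfolding E_def F_def by auto
qed

theorem theorem1:
  fixes x y t :: "nat \<Rightarrow> real"
  assumes "psd (rho_AB x y t)"
  shows "(INF n\<in>unit3. cond_entropy (rho_AB x y t) n)
           \<le> h2 ((1 + sqrt ((norm3 x)^2 + t0_sq x y t)) / 2)
       \<and> classical_corr (rho_AB x y t)
           \<ge> vN_entropy (ptrace_B (rho_AB x y t)) - h2 ((1 + sqrt ((norm3 x)^2 + t0_sq x y t)) / 2)
       \<and> discord (rho_AB x y t)
           \<le> vN_entropy (ptrace_A (rho_AB x y t)) - vN_entropy (rho_AB x y t)
              + h2 ((1 + sqrt ((norm3 x)^2 + t0_sq x y t)) / 2)"
proof -
  let ?R = "rho_AB x y t"
  let ?H = "h2 ((1 + sqrt ((norm3 x)^2 + t0_sq x y t)) / 2)"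
  obtain e where e: "e \<in> unit3" "dot3 e (\<lambda>i. t i * x i) = 0" "dot3 e y = 0"
    and t0: "(\<Sum>i\<in>{1..3}. (t i)^2 * (e i)^2) = t0_sq x y t"
    using t0_sq_attained[of t x y] by blast
  have ce: "cond_entropy ?R e = ?H"
    using cond_entropy_rho_AB_orthogonal[OF assms e] unfolding t0 .
  have "bdd_below (cond_entropy ?R ` unit3)"
    using cond_entropy_rho_AB_nonneg[OF assms] by (intro bdd_belowI[of _ 0]) auto
  then have inf: "(INF n\<in>unit3. cond_entropy ?R n) \<le> ?H"
    using cINF_lower[OF _ e(1)] ce by metis
  have "bdd_above ((\<lambda>n. vN_entropy (ptrace_B ?R) - cond_entropy ?R n) ` unit3)"
    using cond_entropy_rho_AB_nonneg[OF assms] by (intro bdd_aboveI[of _ "vN_entropy (ptrace_B ?R)"]) auto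
  then have corr: "classical_corr ?R \<ge> vN_entropy (ptrace_B ?R) - ?H"
    unfolding classical_corr_def using cSUP_upper[OF e(1)] ce by metis
  then show ?thesis
    using inf unfolding discord_def mutual_info_def by simp
qed

end
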